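(* Let $U$ be an open subset of hyperbolic $3$-space $H^3$ on which the geodesic polar coordinates $(r,\theta,\phi)$, $r>0$, $\theta\in(0,\pi)$, are valid, so that $g_{H^3}=\mathrm{d}r^2+\sinh^2 r\,(\mathrm{d}\theta^2+\sin^2\theta\,\mathrm{d}\phi^2)$, and let $\Lambda:U\to(0,\infty)$ be a smooth function satisfying the Helmholtz equation $$\sinh^2 r\left(\partial_r^2\Lambda+2\coth r\,\partial_r\Lambda+\Lambda\right)+\partial_\theta^2\Lambda+\cot\theta\,\partial_\theta\Lambda+\frac{1}{\sin^2\theta}\partial_\phi^2\Lambda=0,$$ i.e. $\triangle_{H^3}\Lambda+\Lambda=0$. Define the $\mathfrak{su}(2)$-valued function $\Phi$ and $1$-form $\mathcal{A}$ on $U$ by $$\Phi=\frac{1}{2\Lambda}\left(\partial_r\Lambda\,\mathbf{i}+\frac{\partial_\theta\Lambda}{\sinh r}\,\mathbf{j}+\frac{\partial_\phi\Lambda}{\sinh r\sin\theta}\,\mathbf{k}\right),$$ $$\mathcal{A}=\frac{\mathbf{i}}{2}\left[\left(\cos\theta+\sin\theta\,\frac{\partial_\theta\Lambda}{\Lambda}\right)\mathrm{d}\phi-\frac{\partial_\phi\Lambda}{\Lambda\sin\theta}\,\mathrm{d}\theta\right]-\frac{\mathbf{j}}{2}\left[\left(\cosh r+\sinh r\,\frac{\partial_r\Lambda}{\Lambda}\right)\sin\theta\,\mathrm{d}\phi-\frac{\partial_\phi\Lambda}{\Lambda\sinh r\sin\theta}\,\mathrm{d}r\right]+\frac{\mathbf{k}}{2}\left[\left(\cosh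 r+\sinh r\,\frac{\partial_r\Lambda}{\Lambda}\right)\mathrm{d}\theta-\frac{\partial_\theta\Lambda}{\Lambda\sinh r}\,\mathrm{d}r\right].$$ Then $(\Phi,\mathcal{A})$ satisfies the Bogomolny equations $\mathrm{d}_{\mathcal{A}}\Phi=-\ast_{H^3}\mathcal{F}$ on $U$, where $\mathcal{F}$ is the curvature of $\mathcal{A}$.
   Context: $\mathfrak{su}(2)$ is identified with the imaginary quaternions, spanned by the unit quaternions $\mathbf{i},\mathbf{j},\mathbf{k}$ (with $\mathbf{i}\mathbf{j}=\mathbf{k}$ etc.). For an $\mathfrak{su}(2)$-valued $1$-form $\mathcal{A}$ and function $\Phi$: $\mathrm{d}_{\mathcal{A}}\Phi=\mathrm{d}\Phi+[\mathcal{A},\Phi]$ with $[X,Y]=XY-YX$ (quaternion product), and $\mathcal{F}=\mathrm{d}\mathcal{A}+\mathcal{A}\wedge\mathcal{A}$. $\ast_{H^3}$ is the Hodge star of $g_{H^3}$ with orientation given by the volume form $\sinh^2 r\sin\theta\,\mathrm{d}r\wedge\mathrm{d}\theta\wedge\mathrm{d}\phi$. *)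

theory Defs
  imports "HOL-Analysis.Analysis"
begin

text \<open>Coordinates: a point p :: real^3 has p$1 = r, p$2 = theta, p$3 = phi.\<close>

definition pd :: "3 \<Rightarrow> (real^3 \<Rightarrow> 'a::real_normed_vector) \<Rightarrow> real^3 \<Rightarrow> 'a" where
  "pd i f p = frechet_derivative f (at p) (axis i 1)"

fun iter_pd :: "3 list \<Rightarrow> (real^3 \<Rightarrow> real) \<Rightarrow> real^3 \<Rightarrow> real" where
  "iter_pd [] f = f"
| "iter_pd (i # is) f = pd i (iter_pd is f)"

definition smooth_on :: "(real^3) set \<Rightarrow> (real^3 \<Rightarrow> real) \<Rightarrow> bool" where
  "smooth_on U f \<longleftrightarrow> (\<forall>is. iter_pd is f differentiable_on U)"

datatype quat = Quat real real real real

fun qmult :: "quat \<Rightarrow> quat \<Rightarrow> quat" where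
  "qmult (Quat a1 b1 c1 d1) (Quat a2 b2 c2 d2) =
     Quat (a1*a2 - b1*b2 - c1*c2 - d1*d2)
          (a1*b2 + b1*a2 + c1*d2 - d1*c2)
          (a1*c2 - b1*d2 + c1*a2 + d1*b2)
          (a1*d2 + b1*c2 - c1*b2 + d1*a2)"

fun qsub :: "quat \<Rightarrow> quat \<Rightarrow> quat" where
  "qsub (Quat a1 b1 c1 d1) (Quat a2 b2 c2 d2) = Quat (a1-a2) (b1-b2) (c1-c2) (d1-d2)"

text \<open>su(2) = imaginary quaternions, encoded by coefficient vectors (x1,x2,x3) = x1 i + x2 j + x3 k.\<close>
definition to_quat :: "real^3 \<Rightarrow> quat" where
  "to_quat x = Quat 0 (x$1) (x$2) (x$3)"

fun quat_im :: "quat \<Rightarrow> real^3" where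
  "quat_im (Quat a b c d) = vector [b, c, d]"

text \<open>Commutator [X,Y] = XY - YX (quaternion product); it is again imaginary.\<close>
definition su2_bracket :: "real^3 \<Rightarrow> real^3 \<Rightarrow> real^3" where
  "su2_bracket X Y = quat_im (qsub (qmult (to_quat X) (to_quat Y)) (qmult (to_quat Y) (to_quat X)))"

definition gH3 :: "3 \<Rightarrow> real^3 \<Rightarrow> real" where
  "gH3 a p = (if a = 1 then 1 else if a = 2 then (sinh (p$1))^2
              else (sinh (p$1))^2 * (sin (p$2))^2)"

definition volH3 :: "real^3 \<Rightarrow> real" where
  "volH3 p = (sinh (p$1))^2 * sin (p$2)"

definition levi :: "3 \<Rightarrow> 3 \<Rightarrow> 3 \<Rightarrow> real" where
  "levi a b c = (if (a,b,c) \<in> {(1,2,3),(2,3,1),(3,1,2)} then 1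
                 else if (a,b,c) \<in> {(1,3,2),(3,2,1),(2,1,3)} then -1 else 0)"

text \<open>Hodge star of an su(2)-valued 2-form F = (1/2) F_bc dx^b ^ dx^c (components F b c)
  w.r.t. g_H3, orientation sinh^2 r sin theta dr ^ dtheta ^ dphi; result: components of a 1-form.\<close>
definition hodgeH3 :: "real^3 \<Rightarrow> (3 \<Rightarrow> 3 \<Rightarrow> real^3) \<Rightarrow> 3 \<Rightarrow> real^3" where
  "hodgeH3 p F a = (\<Sum>b\<in>UNIV. \<Sum>c\<in>UNIV.
      (levi a b c * volH3 p / (2 * gH3 b p * gH3 c p)) *\<^sub>R F b c)"

definition covd :: "(3 \<Rightarrow> real^3 \<Rightarrow> real^3) \<Rightarrow> (real^3 \<Rightarrow> real^3) \<Rightarrow> 3 \<Rightarrow> real^3 \<Rightarrow> real^3" where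
  "covd A Phi a p = pd a Phi p + su2_bracket (A a p) (Phi p)"

definition curv :: "(3 \<Rightarrow> real^3 \<Rightarrow> real^3) \<Rightarrow> real^3 \<Rightarrow> 3 \<Rightarrow> 3 \<Rightarrow> real^3" where
  "curv A p b c = pd b (A c) p - pd c (A b) p + su2_bracket (A b p) (A c p)"

definition PhiL :: "(real^3 \<Rightarrow> real) \<Rightarrow> real^3 \<Rightarrow> real^3" where
  "PhiL L p = (1 / (2 * L p)) *\<^sub>R vector
     [pd 1 L p, pd 2 L p / sinh (p$1), pd 3 L p / (sinh (p$1) * sin (p$2))]"

definition AL :: "(real^3 \<Rightarrow> real) \<Rightarrow> 3 \<Rightarrow> real^3 \<Rightarrow> real^3" where
  "AL L a p =
    (if a = 1 then
       vector [0,
               pd 3 L p / (2 * L p * sinh (p$1) * sin (p$2)),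
               - pd 2 L p / (2 * L p * sinh (p$1))]
     else if a = 2 then
       vector [- pd 3 L p / (2 * L p * sin (p$2)),
               0,
               (cosh (p$1) + sinh (p$1) * pd 1 L p / L p) / 2]
     else
       vector [(cos (p$2) + sin (p$2) * pd 2 L p / L p) / 2,
               - (cosh (p$1) + sinh (p$1) * pd 1 L p / L p) * sin (p$2) / 2,
               0])"

end

theory Submission
  imports Defs
begin

text \<open>Both sides of the Bogomolny equations at a point are rational expressions in
  \<open>\<Lambda>\<close>, its first and second partial derivatives there, and \<open>sinh r, cosh r, sin \<theta>, cos \<theta>\<close>.
  They coincide once the mixed partials of \<open>\<Lambda>\<close> are identified (Schwarz's theorem, via the
  mean value theorem applied to second differences), \<open>\<partial>\<^sub>\<phi>\<^sup>2\<Lambda>\<close> is eliminated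
  by the Helmholtz equation, and \<open>cosh\<^sup>2 r = 1 + sinh\<^sup>2 r\<close> is used.\<close>

lemma pd_eqI: "(f has_derivative f') (at p) \<Longrightarrow> pd i f p = f' (axis i 1)"
  unfolding pd_def by (metis frechet_derivative_at)

lemmas has_frechet_derivative = frechet_derivative_works[THEN iffD1]

lemma pd_add:
  "f differentiable at p \<Longrightarrow> g differentiable at p \<Longrightarrow>
    pd i (\<lambda>x. f x + g x) p = pd i f p + pd i g p"
  using pd_eqI[OF has_derivative_add[OF has_frechet_derivative has_frechet_derivative]]
  by (simp add: pd_def)

lemma pd_diff:
  "f differentiable at p \<Longrightarrow> g differentiable at p \<Longrightarrow>
    pd i (\<lambda>x. f x - g x) p = pd i f p - pd i g p"
  using pd_eqI[OF has_derivative_diff[OF has_frechet_derivative has_frechet_derivative]]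
  by (simp add: pd_def)

lemma pd_minus: "f differentiable at p \<Longrightarrow> pd i (\<lambda>x. - f x) p = - pd i f p"
  using pd_eqI[OF has_derivative_minus[OF has_frechet_derivative]] by (simp add: pd_def)

lemma pd_const: "pd i (\<lambda>x. c) p = 0"
  using pd_eqI[OF has_derivative_const, of i c p] by simp

lemma pd_mult:
  fixes f g :: "real^3 \<Rightarrow> real"
  shows "f differentiable at p \<Longrightarrow> g differentiable at p \<Longrightarrow>
    pd i (\<lambda>x. f x * g x) p = f p * pd i g p + pd i f p * g p"
  using pd_eqI[OF has_derivative_mult[OF has_frechet_derivative has_frechet_derivative]]
  by (simp add: pd_def)

lemma pd_divide:
  fixes f g :: "real^3 \<Rightarrow> real"
  assumes "f differentiable at p" "g differentiable at p" "g p \<noteq> 0"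
  shows "pd i (\<lambda>x. f x / g x) p = (pd i f p * g p - f p * pd i g p) / (g p)\<^sup>2"
  using pd_eqI[OF has_derivative_divide[OF assms(1,2)[THEN has_frechet_derivative] assms(3)], of i]
  by (simp add: pd_def field_simps power2_eq_square assms(3))

lemma pd_vector3:
  fixes f g h :: "real^3 \<Rightarrow> real"
  assumes "f differentiable at p" "g differentiable at p" "h differentiable at p"
  shows "pd i (\<lambda>x. vector [f x, g x, h x] :: real^3) p = vector [pd i f p, pd i g p, pd i h p]"
proof -
  have vector_axis:
    "(vector [a, b, c] :: real^3) = a *\<^sub>R axis 1 1 + b *\<^sub>R axis 2 1 + c *\<^sub>R axis 3 (1::real)" for a b c :: real
    by (simp add: vec_eq_iff forall_3 axis_def vector_3)
  show ?thesis
    unfolding vector_axis pd_def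
    by (rule pd_eqI[unfolded pd_def])
      (intro has_derivative_add has_derivative_scaleR_left has_frechet_derivative assms)
qed

lemma has_derivative_coordinate_comp:
  assumes "(h has_real_derivative D) (at (p$k))"
  shows "((\<lambda>x. h (x$k)) has_derivative (\<lambda>v. D * v$k)) (at p)"
  using has_derivative_compose[OF bounded_linear_imp_has_derivative[OF bounded_linear_vec_nth]
      assms[unfolded has_field_derivative_def]]
  by (simp add: mult.commute)

lemma pd_coordinate_comp:
  "(h has_real_derivative D) (at (p$k)) \<Longrightarrow> pd i (\<lambda>x. h (x$k)) p = (if i = k then D else 0)"
  by (simp add: pd_eqI[OF has_derivative_coordinate_comp] axis_def)

lemma differentiable_coordinate_comp:
  "(h has_real_derivative D) (at (p$k)) \<Longrightarrow> (\<lambda>x. h (x$k)) differentiable at p"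
  using has_derivative_coordinate_comp differentiable_def by blast

lemma pd_sinh: "pd i (\<lambda>x. sinh (x$k)) p = (if i = k then cosh (p$k) else 0)"
  and pd_cosh: "pd i (\<lambda>x. cosh (x$k)) p = (if i = k then sinh (p$k) else 0)"
  and pd_sin: "pd i (\<lambda>x. sin (x$k)) p = (if i = k then cos (p$k) else 0)"
  and pd_cos: "pd i (\<lambda>x. cos (x$k)) p = (if i = k then - sin (p$k) else 0)"
  by (rule pd_coordinate_comp; auto intro!: derivative_eq_intros)+

lemma differentiable_sinh_coordinate [simp]: "(\<lambda>x. sinh (x$k)) differentiable at (p::real^3)"
  and differentiable_cosh_coordinate [simp]: "(\<lambda>x. cosh (x$k)) differentiable at p"
  and differentiable_sin_coordinate [simp]: "(\<lambda>x. sin (x$k)) differentiable at p"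
  and differentiable_cos_coordinate [simp]: "(\<lambda>x. cos (x$k)) differentiable at p"
  by (auto intro!: differentiable_coordinate_comp derivative_eq_intros)

lemma has_real_derivative_pd_along_axis:
  assumes "f differentiable at (q + s *\<^sub>R axis i 1)"
  shows "((\<lambda>t. f (q + t *\<^sub>R axis i 1)) has_real_derivative pd i f (q + s *\<^sub>R axis i 1)) (at s)"
proof -
  let ?x = "q + s *\<^sub>R axis i 1" and ?F = "frechet_derivative f (at (q + s *\<^sub>R axis i 1))"
  have "((\<lambda>t. q + t *\<^sub>R axis i 1) has_derivative (\<lambda>t. t *\<^sub>R axis i 1)) (at s)"
    by (auto intro!: derivative_eq_intros)
  from has_derivative_compose[OF this has_frechet_derivative[OF assms]]
  have "((\<lambda>t. f (q + t *\<^sub>R axis i 1)) has_derivative (\<lambda>t. ?F (t *\<^sub>R axis i 1))) (at s)" .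
  moreover have "?F (t *\<^sub>R axis i 1) = pd i f ?x * t" for t
    using linear_scale[OF has_derivative_linear[OF has_frechet_derivative[OF assms]]]
    by (simp add: pd_def)
  ultimately show ?thesis
    by (simp add: has_field_derivative_def)
qed

definition second_difference :: "(real^3 \<Rightarrow> real) \<Rightarrow> 3 \<Rightarrow> 3 \<Rightarrow> real^3 \<Rightarrow> real \<Rightarrow> real" where
  "second_difference f i j p h =
     f (p + h *\<^sub>R axis i 1 + h *\<^sub>R axis j 1) - f (p + h *\<^sub>R axis i 1) - f (p + h *\<^sub>R axis j 1) + f p"

lemma second_difference_commute: "second_difference f i j p h = second_difference f j i p h"
  by (simp add: second_difference_def add_ac)

lemma second_difference_mvt:
  assumes "0 < h"
    and df: "\<And>s t. s \<in> {0..h} \<Longrightarrow> t \<in> {0..h} \<Longrightarrow>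
      f differentiable at (p + s *\<^sub>R axis i 1 + t *\<^sub>R axis j 1)"
    and dfi: "\<And>s t. s \<in> {0..h} \<Longrightarrow> t \<in> {0..h} \<Longrightarrow>
      pd i f differentiable at (p + s *\<^sub>R axis i 1 + t *\<^sub>R axis j 1)"
  obtains \<xi> \<eta> where "\<xi> \<in> {0<..<h}" "\<eta> \<in> {0<..<h}"
    "second_difference f i j p h = h\<^sup>2 * pd j (pd i f) (p + \<xi> *\<^sub>R axis i 1 + \<eta> *\<^sub>R axis j 1)"
proof -
  let ?e\<^sub>i = "axis i (1::real)" and ?e\<^sub>j = "axis j (1::real)"
  have swap: "p + t *\<^sub>R ?e\<^sub>j + s *\<^sub>R ?e\<^sub>i = p + s *\<^sub>R ?e\<^sub>i + t *\<^sub>R ?e\<^sub>j" for s t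
    by (simp add: add_ac)
  have "\<exists>\<xi>. 0 < \<xi> \<and> \<xi> < h \<and>
      (f (p + h *\<^sub>R ?e\<^sub>j + h *\<^sub>R ?e\<^sub>i) - f (p + h *\<^sub>R ?e\<^sub>i))
        - (f (p + h *\<^sub>R ?e\<^sub>j + 0 *\<^sub>R ?e\<^sub>i) - f (p + 0 *\<^sub>R ?e\<^sub>i))
      = (h - 0) * (pd i f (p + h *\<^sub>R ?e\<^sub>j + \<xi> *\<^sub>R ?e\<^sub>i) - pd i f (p + \<xi> *\<^sub>R ?e\<^sub>i))"
    using df[of _ h] df[of _ 0] \<open>0 < h\<close>
    by (intro MVT2 DERIV_diff has_real_derivative_pd_along_axis) (auto simp: swap)
  then obtain \<xi> where \<xi>: "\<xi> \<in> {0<..<h}"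
    and first_mvt: "second_difference f i j p h
      = h * (pd i f (p + \<xi> *\<^sub>R ?e\<^sub>i + h *\<^sub>R ?e\<^sub>j) - pd i f (p + \<xi> *\<^sub>R ?e\<^sub>i + 0 *\<^sub>R ?e\<^sub>j))"
    by (auto simp: second_difference_def swap)
  have "\<exists>\<eta>. 0 < \<eta> \<and> \<eta> < h \<and>
      pd i f (p + \<xi> *\<^sub>R ?e\<^sub>i + h *\<^sub>R ?e\<^sub>j) - pd i f (p + \<xi> *\<^sub>R ?e\<^sub>i + 0 *\<^sub>R ?e\<^sub>j)
      = (h - 0) * pd j (pd i f) (p + \<xi> *\<^sub>R ?e\<^sub>i + \<eta> *\<^sub>R ?e\<^sub>j)"
    using dfi[of \<xi>] \<xi> \<open>0 < h\<close>
    by (intro MVT2 has_real_derivative_pd_along_axis) auto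
  then obtain \<eta> where "\<eta> \<in> {0<..<h}"
    and "pd i f (p + \<xi> *\<^sub>R ?e\<^sub>i + h *\<^sub>R ?e\<^sub>j) - pd i f (p + \<xi> *\<^sub>R ?e\<^sub>i + 0 *\<^sub>R ?e\<^sub>j)
      = h * pd j (pd i f) (p + \<xi> *\<^sub>R ?e\<^sub>i + \<eta> *\<^sub>R ?e\<^sub>j)"
    by auto
  with \<xi> first_mvt show ?thesis
    by (intro that) (auto simp: power2_eq_square)
qed

lemma dist_axis_steps:
  "dist (p + s *\<^sub>R axis i 1 + t *\<^sub>R axis j 1) p \<le> \<bar>s\<bar> + \<bar>t\<bar>" for p :: "real^'n"
  using norm_triangle_ineq[of "s *\<^sub>R axis i (1::real)" "t *\<^sub>R axis j 1"]
  by (simp add: dist_norm add.assoc)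

lemma second_difference_tendsto:
  assumes "open U" "p \<in> U" "f differentiable_on U" "pd i f differentiable_on U"
    and "isCont (pd j (pd i f)) p"
  shows "((\<lambda>h. second_difference f i j p h / h\<^sup>2) \<longlongrightarrow> pd j (pd i f) p) (at_right 0)"
  unfolding tendsto_iff
proof (intro allI impI)
  fix e :: real
  assume "e > 0"
  obtain d\<^sub>1 where "d\<^sub>1 > 0" and d\<^sub>1: "\<And>x. dist x p < d\<^sub>1 \<Longrightarrow> dist (pd j (pd i f) x) (pd j (pd i f) p) < e"
    using assms(5) \<open>e > 0\<close> unfolding continuous_at_eps_delta by blast
  obtain d\<^sub>2 where "d\<^sub>2 > 0" and d\<^sub>2: "ball p d\<^sub>2 \<subseteq> U"
    using assms(1,2) open_contains_ball by blast
  define d where "d = min d\<^sub>1 d\<^sub>2"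
  show "eventually (\<lambda>h. dist (second_difference f i j p h / h\<^sup>2) (pd j (pd i f) p) < e) (at_right 0)"
  proof (rule eventually_at_rightI[of 0 "d / 2"])
    fix h :: real
    assume h: "h \<in> {0<..<d / 2}"
    have near: "dist (p + s *\<^sub>R axis i 1 + t *\<^sub>R axis j 1) p < d" if "s \<in> {0..h}" "t \<in> {0..h}" for s t
      using dist_axis_steps[of p s i t j] that h by auto
    have "p + s *\<^sub>R axis i 1 + t *\<^sub>R axis j 1 \<in> U" if "s \<in> {0..h}" "t \<in> {0..h}" for s t
      using near[OF that] d\<^sub>2 by (auto simp: d_def dist_commute)
    then obtain \<xi> \<eta> where "\<xi> \<in> {0<..<h}" "\<eta> \<in> {0<..<h}"
      and "second_difference f i j p h = h\<^sup>2 * pd j (pd i f) (p + \<xi> *\<^sub>R axis i 1 + \<eta> *\<^sub>R axis j 1)"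
      using second_difference_mvt[of h f p i j] assms(1,3,4) h
      by (metis differentiable_on_eq_differentiable_at greaterThanLessThan_iff)
    with h near[of \<xi> \<eta>] d\<^sub>1 show "dist (second_difference f i j p h / h\<^sup>2) (pd j (pd i f) p) < e"
      by (auto simp: d_def)
  qed (use \<open>d\<^sub>1 > 0\<close> \<open>d\<^sub>2 > 0\<close> d_def in auto)
qed

lemma pd_commute:
  fixes f :: "real^3 \<Rightarrow> real"
  assumes "open U" "p \<in> U" "f differentiable_on U"
    and "pd i f differentiable_on U" "pd j f differentiable_on U"
    and "continuous_on U (pd j (pd i f))" "continuous_on U (pd i (pd j f))"
  shows "pd j (pd i f) p = pd i (pd j f) p"
proof (rule tendsto_unique[OF trivial_limit_at_right_real])
  show "((\<lambda>h. second_difference f i j p h / h\<^sup>2) \<longlongrightarrow> pd j (pd i f) p) (at_right 0)"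
    using assms by (intro second_difference_tendsto) (auto simp: continuous_on_eq_continuous_at)
  show "((\<lambda>h. second_difference f i j p h / h\<^sup>2) \<longlongrightarrow> pd i (pd j f) p) (at_right 0)"
    unfolding second_difference_commute[of f i j]
    using assms by (intro second_difference_tendsto) (auto simp: continuous_on_eq_continuous_at)
qed

lemma smooth_on_differentiable_at:
  "smooth_on U f \<Longrightarrow> open U \<Longrightarrow> p \<in> U \<Longrightarrow> iter_pd is f differentiable at p"
  unfolding smooth_on_def using differentiable_on_eq_differentiable_at by blast

lemma smooth_on_pd_commute:
  assumes "smooth_on U f" "open U" "p \<in> U"
  shows "pd j (pd i f) p = pd i (pd j f) p"
proof -
  have "iter_pd is f differentiable_on U" for "is"
    using assms(1) smooth_on_def by blast
  from this[of "[]"] this[of "[i]"] this[of "[j]"]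
    this[of "[j, i]", THEN differentiable_imp_continuous_on]
    this[of "[i, j]", THEN differentiable_imp_continuous_on]
  show ?thesis
    by (intro pd_commute[OF assms(2,3)]) simp_all
qed

lemma su2_bracket_eq_cross3: "su2_bracket X Y = 2 *\<^sub>R cross3 X Y"
  by (simp add: su2_bracket_def to_quat_def cross3_def vec_eq_iff forall_3 vector_3 algebra_simps)

lemma levi_simps:
  "levi 1 2 3 = 1" "levi 2 3 1 = 1" "levi 3 1 2 = 1"
  "levi 1 3 2 = -1" "levi 3 2 1 = -1" "levi 2 1 3 = -1"
  "levi a a c = 0" "levi a b b = 0" "levi a b a = 0"
  by (auto simp: levi_def)

lemma gH3_simps: "gH3 1 p = 1" "gH3 2 p = (sinh (p$1))\<^sup>2" "gH3 3 p = (sinh (p$1))\<^sup>2 * (sin (p$2))\<^sup>2"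
  by (auto simp: gH3_def)

lemma PhiL_eq:
  "PhiL L = (\<lambda>x. vector [(1 / (2 * L x)) * pd 1 L x,
                          (1 / (2 * L x)) * (pd 2 L x / sinh (x$1)),
                          (1 / (2 * L x)) * (pd 3 L x / (sinh (x$1) * sin (x$2)))])"
  by (rule ext) (simp add: PhiL_def vec_eq_iff forall_3)

lemma AL_components:
  "AL L 1 = (\<lambda>p. vector [0, pd 3 L p / (2 * L p * sinh (p$1) * sin (p$2)),
                            - pd 2 L p / (2 * L p * sinh (p$1))])"
  "AL L 2 = (\<lambda>p. vector [- pd 3 L p / (2 * L p * sin (p$2)), 0,
                            (cosh (p$1) + sinh (p$1) * pd 1 L p / L p) / 2])"
  "AL L 3 = (\<lambda>p. vector [(cos (p$2) + sin (p$2) * pd 2 L p / L p) / 2,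
                            - (cosh (p$1) + sinh (p$1) * pd 1 L p / L p) * sin (p$2) / 2, 0])"
  by (auto simp: AL_def)

lemmas pd_simps = pd_vector3 pd_add pd_diff pd_minus pd_const pd_mult pd_divide pd_sinh pd_cosh pd_sin pd_cos

lemma bogomolny_equations_at:
  fixes L :: "real^3 \<Rightarrow> real"
  assumes "p$1 \<noteq> 0" "sin (p$2) \<noteq> 0" "L p \<noteq> 0"
    and "L differentiable at p" "\<And>i. pd i L differentiable at p"
    and symmetric: "\<And>i j. pd j (pd i L) p = pd i (pd j L) p"
    and helmholtz: "(sinh (p$1))\<^sup>2 * (pd 1 (pd 1 L) p
              + 2 * (cosh (p$1) / sinh (p$1)) * pd 1 L p + L p)
            + pd 2 (pd 2 L) p + (cos (p$2) / sin (p$2)) * pd 2 L p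
            + (1 / (sin (p$2))\<^sup>2) * pd 3 (pd 3 L) p = 0"
  shows "covd (AL L) (PhiL L) a p = - hodgeH3 p (curv (AL L) p) a"
proof -
  have "sinh (p$1) \<noteq> 0"
    using assms(1) by simp
  note nonzero = assms(1-3) this
  have pd33: "pd 3 (pd 3 L) p = - (sin (p$2))\<^sup>2 * ((sinh (p$1))\<^sup>2 * (pd 1 (pd 1 L) p
              + 2 * (cosh (p$1) / sinh (p$1)) * pd 1 L p + L p)
            + pd 2 (pd 2 L) p + (cos (p$2) / sin (p$2)) * pd 2 L p)"
    using helmholtz nonzero by (simp add: field_simps)
  have "\<forall>a. covd (AL L) (PhiL L) a p = - hodgeH3 p (curv (AL L) p) a"
    unfolding forall_3 covd_def hodgeH3_def curv_def sum_3 levi_simps gH3_simps AL_components PhiL_eq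
    apply (simp add: pd_simps assms(4,5) nonzero
        su2_bracket_eq_cross3 cross3_def vec_eq_iff forall_3 symmetric pd33 volH3_def)
    apply (simp add: field_simps nonzero)
    apply (intro conjI)
    apply (use cosh_square_eq[of "p$1"] in algebra)+
    done
  then show ?thesis ..
qed

theorem mainTheorem1:
  fixes U :: "(real^3) set" and L :: "real^3 \<Rightarrow> real"
  assumes "open U"
    and "U \<subseteq> {p. 0 < p$1 \<and> 0 < p$2 \<and> p$2 < pi}"
    and "smooth_on U L"
    and "\<forall>p\<in>U. L p > 0"
    and "\<forall>p\<in>U. (sinh (p$1))^2 * (pd 1 (pd 1 L) p
              + 2 * (cosh (p$1) / sinh (p$1)) * pd 1 L p + L p)
            + pd 2 (pd 2 L) p + (cos (p$2) / sin (p$2)) * pd 2 L p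
            + (1 / (sin (p$2))^2) * pd 3 (pd 3 L) p = 0"
  shows "\<forall>p\<in>U. \<forall>a. covd (AL L) (PhiL L) a p = - hodgeH3 p (curv (AL L) p) a"
proof (intro ballI allI)
  fix p a
  assume "p \<in> U"
  with assms(2) have "0 < p$1" "0 < p$2" "p$2 < pi"
    by auto
  have differentiable: "iter_pd is L differentiable at p" for "is"
    using smooth_on_differentiable_at[OF assms(3,1) \<open>p \<in> U\<close>] .
  show "covd (AL L) (PhiL L) a p = - hodgeH3 p (curv (AL L) p) a"
  proof (rule bogomolny_equations_at)
    show "p$1 \<noteq> 0" "sin (p$2) \<noteq> 0"
      using \<open>0 < p$1\<close> sin_gt_zero[OF \<open>0 < p$2\<close> \<open>p$2 < pi\<close>] by simp_all
    show "L p \<noteq> 0"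
      using assms(4) \<open>p \<in> U\<close> by force
    show "L differentiable at p" "pd i L differentiable at p" for i
      using differentiable[of "[]"] differentiable[of "[i]"] by simp_all
    show "pd j (pd i L) p = pd i (pd j L) p" for i j
      using smooth_on_pd_commute[OF assms(3,1) \<open>p \<in> U\<close>] .
  qed (use assms(5) \<open>p \<in> U\<close> in blast)
qed

end
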